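(* For a single parity-check (SPC) product code, the erasure probability of the first decoded information bit under successive cancellation (SC) decoding is equal to the erasure probability of each information bit under Elias' decoding.
   Context: Consider an $m$-dimensional $(n,k)$ systematic single parity-check (SPC) product code, i.e., a product code whose $\ell$-th component code, $\ell=1,\dots,m$, is an $(n_\ell,n_\ell-1)$ SPC code, so that $n=\prod_{\ell}n_\ell$ and $k=\prod_\ell (n_\ell-1)$. Transmission takes place over the binary erasure channel BEC($\epsilon_{\mathrm{ch}}$). The information bits are $u_1,\dots,u_k$. Under successive cancellation (SC) decoding, the bits are decoded in the order $i=1,\dots,k$, the decision on $u_i$ being based on the channel output and on the decisions for $u_1,\dots,u_{i-1}$ (the likelihoods are computed recursively over the dimensions, as for a polar code built from kernels whose first row is $(1,0,\dots,0)$ and whose remaining rows are $(1\,|\,\text{identity})$); over the BEC the decoder outputs an erasure in case of a tie. Under Elias' decoding, the product code is decoded as a serial concatenation, component codes of the first dimension first up to the last dimension in one sweep, and the likelihood of each $u_i$ is computed without using decisions on any other information bit (so all bits are decoded in parallel); over the BEC it also outputs an erasure on ties. With genie-aided knowledge of the preceding bits, the SC erasure probability $\epsilon^{(i)}_{\boldsymbol{G}^{[m]}}$ of bit $i$ obeys $\epsilon^{(i)}_{\boldsymbol{G}^{[m]}}=\epsilon^{(j+1)}_{\boldsymbol{G}^{[m-1]}}\bigl(1-(1-\epsilon^{(j+1)}_{\boldsymbol{G}^{[m-1]}})^{n_m-t}\bigr)$ with $j=\lfloor (i-1)/k_m\rfloor$, $t=((i-1)\bmod k_m)+1$, $k_m=n_m-1$,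 starting from $\epsilon_{\mathrm{ch}}$ at dimension $0$. *)

theory Defs
  imports Complex_Main
begin

text \<open>An m-dimensional SPC product code with component lengths ns = [n_1,...,n_m].
  Code positions are index vectors x (lists) with x!l < ns!l (0-based dimension l).\<close>

definition positions :: "nat list \<Rightarrow> nat list set" where
  "positions ns = {x. length x = length ns \<and> (\<forall>l<length ns. x ! l < ns ! l)}"

definition info_positions :: "nat list \<Rightarrow> nat list set" where
  "info_positions ns = {x. length x = length ns \<and> (\<forall>l<length ns. x ! l < ns ! l - 1)}"

text \<open>Elias' decoding over the BEC, given the set S of channel-erased positions:
  after processing dimension l (0-based), a position is still erased iff it was erased
  before and some other position on its line in dimension l was erased before
  (SPC component decoding on the BEC; ties are erasures).\<close>
fun elias_erased :: "nat list \<Rightarrow> nat list set \<Rightarrow> nat \<Rightarrow> nat list set" where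
  "elias_erased ns S 0 = S"
| "elias_erased ns S (Suc l) =
     {x \<in> elias_erased ns S l. \<exists>c < ns ! l. c \<noteq> x ! l \<and> x[l := c] \<in> elias_erased ns S l}"

text \<open>Erasure probability of position x under Elias' decoding over BEC(eps):
  every position is erased independently with probability eps.\<close>
definition elias_prob :: "nat list \<Rightarrow> real \<Rightarrow> nat list \<Rightarrow> real" where
  "elias_prob ns eps x =
     (\<Sum>S\<in>Pow (positions ns).
        (if x \<in> elias_erased ns S (length ns)
         then eps ^ card S * (1 - eps) ^ (card (positions ns) - card S) else 0))"

text \<open>Genie-aided SC erasure probability of bit i (1-based), via the recursion over
  dimensions; the argument list is the reversed list of component lengths
  (so the head is n_m, the last dimension).\<close>
fun sc_rev :: "real \<Rightarrow> nat list \<Rightarrow> nat \<Rightarrow> real" where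
  "sc_rev eps [] i = eps"
| "sc_rev eps (nm # rest) i =
     (let km = nm - 1; j = (i - 1) div km; t = (i - 1) mod km + 1;
          e = sc_rev eps rest (j + 1)
      in e * (1 - (1 - e) ^ (nm - t)))"

definition sc_prob :: "nat list \<Rightarrow> real \<Rightarrow> nat \<Rightarrow> real" where
  "sc_prob ns eps i = sc_rev eps (rev ns) i"

end

theory Submission
  imports Defs
begin

(* After Elias' decoder has processed dimensions 1..l, whether position y is still erased
   depends only on the channel erasures in the l-dimensional sub-array through y, i.e. the
   positions agreeing with y in dimensions l+1..m. Varying the (l+1)-th coordinate of y gives
   n_(l+1) pairwise disjoint such sub-arrays, so over the BEC the corresponding events are
   independent and the erasure probability p_l after l dimensions obeys
   p_(l+1) = p_l (1 - (1 - p_l)^(n_(l+1) - 1)). This is the SC recursion for the first bit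
   (j = 0, t = 1). *)

section \<open>Expectations over independent erasures\<close>

definition bec_weight :: "real \<Rightarrow> 'a set \<Rightarrow> 'a set \<Rightarrow> real" where
  "bec_weight e P S = e ^ card S * (1 - e) ^ (card P - card S)"

definition bec_expect :: "real \<Rightarrow> 'a set \<Rightarrow> ('a set \<Rightarrow> real) \<Rightarrow> real" where
  "bec_expect e P g = (\<Sum>S\<in>Pow P. bec_weight e P S * g S)"

definition depends_only_on :: "('a set \<Rightarrow> real) \<Rightarrow> 'a set \<Rightarrow> bool" where
  "depends_only_on g B \<longleftrightarrow> (\<forall>S. g S = g (S \<inter> B))"

lemma depends_only_on_mono:
  "depends_only_on g B \<Longrightarrow> B \<subseteq> D \<Longrightarrow> depends_only_on g D"
  unfolding depends_only_on_def by (metis Int_assoc inf.absorb_iff2)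

lemma depends_only_on_prod:
  "(\<And>c. c \<in> C \<Longrightarrow> depends_only_on (G c) B) \<Longrightarrow> depends_only_on (\<lambda>S. \<Prod>c\<in>C. G c S) B"
  unfolding depends_only_on_def by (metis (no_types, lifting) prod.cong)

lemma depends_only_on_compose:
  "depends_only_on g B \<Longrightarrow> depends_only_on (\<lambda>S. f (g S)) B"
  unfolding depends_only_on_def by metis

lemma depends_only_on_mult:
  "depends_only_on g B \<Longrightarrow> depends_only_on h B \<Longrightarrow> depends_only_on (\<lambda>S. g S * h S) B"
  unfolding depends_only_on_def by metis

lemma sum_Pow_Un_disjoint:
  assumes "A \<inter> B = {}"
  shows "(\<Sum>S\<in>Pow (A \<union> B). F S) = (\<Sum>S\<in>Pow A. \<Sum>T\<in>Pow B. F (S \<union> T))"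
proof -
  have "inj_on (\<lambda>(S, T). S \<union> T) (Pow A \<times> Pow B)"
  proof (rule inj_onI, clarsimp)
    fix S T S' T' assume "S \<subseteq> A" "T \<subseteq> B" "S' \<subseteq> A" "T' \<subseteq> B" "S \<union> T = S' \<union> T'"
    with assms show "S = S' \<and> T = T'"
      by blast
  qed
  moreover have "Pow (A \<union> B) = (\<lambda>(S, T). S \<union> T) ` (Pow A \<times> Pow B)"
  proof
    show "Pow (A \<union> B) \<subseteq> (\<lambda>(S, T). S \<union> T) ` (Pow A \<times> Pow B)"
      by (auto intro!: image_eqI[of _ _ "(U \<inter> A, U \<inter> B)" for U])
  qed auto
  ultimately show ?thesis
    by (simp add: sum.reindex sum.cartesian_product case_prod_unfold)
qed

lemma bec_weight_Un:
  assumes "finite A" "finite B" "A \<inter> B = {}" "S \<subseteq> A" "T \<subseteq> B"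
  shows "bec_weight e (A \<union> B) (S \<union> T) = bec_weight e A S * bec_weight e B T"
proof -
  have "finite S" "finite T" "S \<inter> T = {}"
    using assms finite_subset by blast+
  then have card_ST: "card (S \<union> T) = card S + card T"
    by (rule card_Un_disjoint)
  have "card S \<le> card A" "card T \<le> card B"
    using assms card_mono by blast+
  then have "card (A \<union> B) - card (S \<union> T) = (card A - card S) + (card B - card T)"
    using card_ST card_Un_disjoint[OF assms(1-3)] by linarith
  with card_ST show ?thesis
    unfolding bec_weight_def by (simp add: power_add mult_ac)
qed

lemma bec_expect_Un_mult:
  assumes "finite A" "finite B" "A \<inter> B = {}"
    and "depends_only_on g A" "depends_only_on h B"
  shows "bec_expect e (A \<union> B) (\<lambda>S. g S * h S) = bec_expect e A g * bec_expect e B h"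
proof -
  have "bec_expect e (A \<union> B) (\<lambda>S. g S * h S) =
      (\<Sum>S\<in>Pow A. \<Sum>T\<in>Pow B. bec_weight e (A \<union> B) (S \<union> T) * (g (S \<union> T) * h (S \<union> T)))"
    unfolding bec_expect_def by (rule sum_Pow_Un_disjoint[OF assms(3)])
  also have "\<dots> = (\<Sum>S\<in>Pow A. \<Sum>T\<in>Pow B. (bec_weight e A S * g S) * (bec_weight e B T * h T))"
  proof (intro sum.cong refl)
    fix S T assume ST: "S \<in> Pow A" "T \<in> Pow B"
    then have "(S \<union> T) \<inter> A = S" "(S \<union> T) \<inter> B = T"
      using assms(3) by auto
    then have "g (S \<union> T) = g S" "h (S \<union> T) = h T"
      using assms(4,5) unfolding depends_only_on_def by metis+
    with ST show "bec_weight e (A \<union> B) (S \<union> T) * (g (S \<union> T) * h (S \<union> T)) =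
        (bec_weight e A S * g S) * (bec_weight e B T * h T)"
      by (simp add: bec_weight_Un[OF assms(1-3)])
  qed
  also have "\<dots> = bec_expect e A g * bec_expect e B h"
    unfolding bec_expect_def by (simp add: sum_product)
  finally show ?thesis .
qed

lemma bec_expect_const_1:
  assumes "finite P"
  shows "bec_expect e P (\<lambda>_. 1) = 1"
proof -
  have "(\<Sum>S\<in>Pow P. e ^ card S * (1 - e) ^ card (P - S)) = (\<Prod>_\<in>P. e + (1 - e))"
    using prod_add[OF assms, of "\<lambda>_. e" "\<lambda>_. 1 - e"] by simp
  moreover have "card (P - S) = card P - card S" if "S \<in> Pow P" for S
    using that assms by (simp add: card_Diff_subset finite_subset)
  ultimately show ?thesis
    unfolding bec_expect_def bec_weight_def by simp
qed

lemma bec_expect_restrict: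
  assumes "finite P" "B \<subseteq> P" "depends_only_on g B"
  shows "bec_expect e P g = bec_expect e B g"
proof -
  have "bec_expect e P g = bec_expect e (B \<union> (P - B)) (\<lambda>S. g S * 1)"
    using assms(2) by (simp add: Un_absorb1)
  also have "\<dots> = bec_expect e B g"
    using assms finite_subset[OF assms(2)]
    by (subst bec_expect_Un_mult) (auto simp: bec_expect_const_1 depends_only_on_def)
  finally show ?thesis .
qed

lemma bec_expect_mult_indep:
  assumes "finite P" "A \<subseteq> P" "B \<subseteq> P" "A \<inter> B = {}"
    and "depends_only_on g A" "depends_only_on h B"
  shows "bec_expect e P (\<lambda>S. g S * h S) = bec_expect e P g * bec_expect e P h"
proof -
  have "finite A" "finite B"
    using assms finite_subset by blast+
  have "depends_only_on (\<lambda>S. g S * h S) (A \<union> B)"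
    using assms(5,6) by (blast intro: depends_only_on_mult depends_only_on_mono)
  then have "bec_expect e P (\<lambda>S. g S * h S) = bec_expect e (A \<union> B) (\<lambda>S. g S * h S)"
    using assms(1-3) by (simp add: bec_expect_restrict)
  also have "\<dots> = bec_expect e A g * bec_expect e B h"
    using \<open>finite A\<close> \<open>finite B\<close> assms(4-6) by (rule bec_expect_Un_mult)
  also have "\<dots> = bec_expect e P g * bec_expect e P h"
    using assms by (simp add: bec_expect_restrict)
  finally show ?thesis .
qed

lemma bec_expect_prod_indep:
  assumes "finite P" "finite C"
    and "\<And>c. c \<in> C \<Longrightarrow> B c \<subseteq> P" "\<And>c. c \<in> C \<Longrightarrow> depends_only_on (G c) (B c)"
    and "\<And>c d. c \<in> C \<Longrightarrow> d \<in> C \<Longrightarrow> c \<noteq> d \<Longrightarrow> B c \<inter> B d = {}"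
  shows "bec_expect e P (\<lambda>S. \<Prod>c\<in>C. G c S) = (\<Prod>c\<in>C. bec_expect e P (G c))"
  using assms(2-5)
proof (induction C rule: finite_induct)
  case empty
  then show ?case
    by (simp add: bec_expect_const_1[OF assms(1)])
next
  case (insert a C)
  have "bec_expect e P (\<lambda>S. G a S * (\<Prod>c\<in>C. G c S)) =
      bec_expect e P (G a) * bec_expect e P (\<lambda>S. \<Prod>c\<in>C. G c S)"
  proof (rule bec_expect_mult_indep[OF assms(1), of "B a" "\<Union>c\<in>C. B c"])
    show "depends_only_on (\<lambda>S. \<Prod>c\<in>C. G c S) (\<Union>c\<in>C. B c)"
      using insert.prems(2) by (intro depends_only_on_prod) (blast intro: depends_only_on_mono)
    show "B a \<inter> (\<Union>c\<in>C. B c) = {}"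
      using insert.prems(3) insert.hyps(2) by fastforce
  qed (use insert.prems in auto)
  with insert show ?case
    by simp
qed

lemma bec_expect_one_minus:
  "finite P \<Longrightarrow> bec_expect e P (\<lambda>S. 1 - g S) = 1 - bec_expect e P g"
  using bec_expect_const_1[of P e]
  by (simp add: bec_expect_def right_diff_distrib sum_subtractf)

lemma bec_expect_singleton_indicator: "bec_expect e {y} (\<lambda>S. of_bool (y \<in> S)) = e"
proof -
  have "Pow {y} = {{}, {y}}"
    by blast
  then show ?thesis
    by (simp add: bec_expect_def bec_weight_def)
qed

section \<open>Sub-arrays of the product code\<close>

lemma positions_eq_product_lists: "positions ns = set (product_lists (map (\<lambda>n. [0..<n]) ns))"
  by (auto simp: positions_def product_lists_set list_all2_conv_all_nth)

lemma finite_positions: "finite (positions ns)"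
  by (simp add: positions_eq_product_lists)

definition subarray :: "nat list \<Rightarrow> nat list \<Rightarrow> nat \<Rightarrow> nat list set" where
  "subarray ns y l = {z \<in> positions ns. \<forall>j. l \<le> j \<and> j < length ns \<longrightarrow> z ! j = y ! j}"

lemma subarray_subset_positions: "subarray ns y l \<subseteq> positions ns"
  by (auto simp: subarray_def)

lemma subarray_0: "y \<in> positions ns \<Longrightarrow> subarray ns y 0 = {y}"
  by (auto simp: subarray_def positions_def intro: nth_equalityI)

lemma subarray_update_subset_Suc: "subarray ns (y[l := c]) l \<subseteq> subarray ns y (Suc l)"
  by (auto simp: subarray_def)

lemma subarray_update_disjoint:
  assumes "l < length ns" "l < length y" "c \<noteq> d"
  shows "subarray ns (y[l := c]) l \<inter> subarray ns (y[l := d]) l = {}"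
  using assms by (fastforce simp: subarray_def)

lemma update_in_positions:
  "y \<in> positions ns \<Longrightarrow> c < ns ! l \<Longrightarrow> y[l := c] \<in> positions ns"
  by (cases "l < length y") (auto simp: positions_def nth_list_update)

section \<open>Elias' decoding\<close>

lemma elias_erased_local:
  assumes "y \<in> positions ns" "l \<le> length ns" "S \<inter> subarray ns y l = T \<inter> subarray ns y l"
  shows "y \<in> elias_erased ns S l \<longleftrightarrow> y \<in> elias_erased ns T l"
  using assms
proof (induction l arbitrary: y)
  case 0
  then show ?case
    by (auto simp: subarray_0)
next
  case (Suc l)
  have erased_update: "y[l := c] \<in> elias_erased ns S l \<longleftrightarrow> y[l := c] \<in> elias_erased ns T l"
    if "c < ns ! l" for c
  proof (rule Suc.IH)
    show "y[l := c] \<in> positions ns"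
      using Suc.prems(1) that by (rule update_in_positions)
    show "S \<inter> subarray ns (y[l := c]) l = T \<inter> subarray ns (y[l := c]) l"
      using Suc.prems(3) subarray_update_subset_Suc[of ns y l c] by blast
  qed (use Suc.prems(2) in simp)
  have "y ! l < ns ! l"
    using Suc.prems(1,2) by (simp add: positions_def)
  then have "y \<in> elias_erased ns S l \<longleftrightarrow> y \<in> elias_erased ns T l"
    using erased_update[of "y ! l"] by simp
  moreover have "(\<exists>c < ns ! l. c \<noteq> y ! l \<and> y[l := c] \<in> elias_erased ns S l) \<longleftrightarrow>
      (\<exists>c < ns ! l. c \<noteq> y ! l \<and> y[l := c] \<in> elias_erased ns T l)"
    using erased_update by blast
  ultimately show ?case
    by simp
qed

lemma depends_only_on_elias_erased:
  assumes "y \<in> positions ns" "l \<le> length ns"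
  shows "depends_only_on (\<lambda>S. of_bool (y \<in> elias_erased ns S l)) (subarray ns y l)"
  unfolding depends_only_on_def
proof
  fix S
  have "S \<inter> subarray ns y l = (S \<inter> subarray ns y l) \<inter> subarray ns y l"
    by blast
  with assms show "of_bool (y \<in> elias_erased ns S l) =
      (of_bool (y \<in> elias_erased ns (S \<inter> subarray ns y l) l) :: real)"
    by (subst elias_erased_local) auto
qed

lemma indicator_elias_erased_Suc:
  "of_bool (y \<in> elias_erased ns S (Suc l)) =
     (of_bool (y \<in> elias_erased ns S l) :: real) *
     (1 - (\<Prod>c\<in>{..<ns ! l} - {y ! l}. 1 - of_bool (y[l := c] \<in> elias_erased ns S l)))"
  by (auto simp: prod_zero_iff intro!: prod.neutral)

lemma sc_prob_take_Suc_1: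
  assumes "l < length ns"
  shows "sc_prob (take (Suc l) ns) e 1 =
    sc_prob (take l ns) e 1 * (1 - (1 - sc_prob (take l ns) e 1) ^ (ns ! l - 1))"
  using assms by (simp add: sc_prob_def take_Suc_conv_app_nth Let_def)

lemma bec_expect_elias_erased_Suc:
  fixes p :: real
  assumes y: "y \<in> positions ns" and l: "l < length ns"
    and IH: "\<And>z. z \<in> positions ns \<Longrightarrow>
      bec_expect e (positions ns) (\<lambda>S. of_bool (z \<in> elias_erased ns S l)) = p"
  shows "bec_expect e (positions ns) (\<lambda>S. of_bool (y \<in> elias_erased ns S (Suc l))) =
    p * (1 - (1 - p) ^ (ns ! l - 1))"
proof -
  define C where "C = {..<ns ! l} - {y ! l}"
  define erased where "erased z S = (of_bool (z \<in> elias_erased ns S l) :: real)" for z S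
  define E where "E = bec_expect e (positions ns)"
  have "l < length y" "y ! l < ns ! l"
    using y l by (auto simp: positions_def)
  have y_C: "y[l := c] \<in> positions ns" if "c \<in> C" for c
    using that y by (auto simp: C_def update_in_positions)
  have dep: "depends_only_on (erased z) (subarray ns z l)" if "z \<in> positions ns" for z
    unfolding erased_def using that l by (simp add: depends_only_on_elias_erased)
  have disj: "subarray ns (y[l := c]) l \<inter> subarray ns (y[l := d]) l = {}" if "c \<noteq> d" for c d
    using l \<open>l < length y\<close> that by (rule subarray_update_disjoint)
  have disj_y: "subarray ns y l \<inter> (\<Union>c\<in>C. subarray ns (y[l := c]) l) = {}"
    using disj[of "y ! l"] unfolding C_def by (simp add: disjoint_iff)
  have dep_rest: "depends_only_on (\<lambda>S. 1 - (\<Prod>c\<in>C. 1 - erased (y[l := c]) S))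
      (\<Union>c\<in>C. subarray ns (y[l := c]) l)"
    using dep[OF y_C]
    by (intro depends_only_on_compose[where f = "\<lambda>t. 1 - t"] depends_only_on_prod)
      (blast intro: depends_only_on_mono)
  have "E (\<lambda>S. \<Prod>c\<in>C. 1 - erased (y[l := c]) S) = (\<Prod>c\<in>C. E (\<lambda>S. 1 - erased (y[l := c]) S))"
    unfolding E_def
  proof (rule bec_expect_prod_indep[OF finite_positions, where B = "\<lambda>c. subarray ns (y[l := c]) l"])
    show "depends_only_on (\<lambda>S. 1 - erased (y[l := c]) S) (subarray ns (y[l := c]) l)" if "c \<in> C" for c
      using dep[OF y_C[OF that]] by (rule depends_only_on_compose)
  qed (use disj subarray_subset_positions in \<open>auto simp: C_def\<close>)
  also have "\<dots> = (1 - p) ^ (ns ! l - 1)"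
    using IH y_C \<open>y ! l < ns ! l\<close>
    by (simp add: E_def erased_def bec_expect_one_minus finite_positions C_def)
  finally have E_rest: "E (\<lambda>S. \<Prod>c\<in>C. 1 - erased (y[l := c]) S) = (1 - p) ^ (ns ! l - 1)" .
  have "E (\<lambda>S. of_bool (y \<in> elias_erased ns S (Suc l))) =
      E (\<lambda>S. erased y S * (1 - (\<Prod>c\<in>C. 1 - erased (y[l := c]) S)))"
    unfolding indicator_elias_erased_Suc erased_def C_def ..
  also have "\<dots> = E (erased y) * E (\<lambda>S. 1 - (\<Prod>c\<in>C. 1 - erased (y[l := c]) S))"
    unfolding E_def using subarray_subset_positions
    by (intro bec_expect_mult_indep[OF finite_positions _ _ disj_y dep[OF y] dep_rest]) blast+
  also have "\<dots> = p * (1 - (1 - p) ^ (ns ! l - 1))"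
    using IH[OF y] E_rest bec_expect_one_minus[OF finite_positions]
    unfolding E_def erased_def[abs_def] by simp
  finally show ?thesis
    unfolding E_def .
qed

theorem bec_expect_elias_erased:
  assumes "y \<in> positions ns" "l \<le> length ns"
  shows "bec_expect e (positions ns) (\<lambda>S. of_bool (y \<in> elias_erased ns S l)) =
    sc_prob (take l ns) e 1"
  using assms
proof (induction l arbitrary: y)
  case 0
  then have "bec_expect e (positions ns) (\<lambda>S. of_bool (y \<in> elias_erased ns S 0)) =
      bec_expect e {y} (\<lambda>S. of_bool (y \<in> S))"
    using bec_expect_restrict[OF finite_positions subarray_subset_positions
        depends_only_on_elias_erased[of y ns 0]]
    by (simp add: subarray_0)
  then show ?case
    by (simp add: sc_prob_def bec_expect_singleton_indicator)
next
  case (Suc l)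
  then have "l < length ns"
    by simp
  have "bec_expect e (positions ns) (\<lambda>S. of_bool (y \<in> elias_erased ns S (Suc l))) =
      sc_prob (take l ns) e 1 * (1 - (1 - sc_prob (take l ns) e 1) ^ (ns ! l - 1))"
    using Suc.prems(1) \<open>l < length ns\<close> by (rule bec_expect_elias_erased_Suc) (use Suc in simp)
  then show ?case
    by (simp only: sc_prob_take_Suc_1[OF \<open>l < length ns\<close>])
qed

theorem lemma3:
  fixes ns :: "nat list" and eps :: real and x :: "nat list"
  assumes "\<forall>n\<in>set ns. 2 \<le> n"
    and "0 \<le> eps" and "eps \<le> 1"
    and "x \<in> info_positions ns"
  shows "sc_prob ns eps 1 = elias_prob ns eps x"
proof -
  have "x \<in> positions ns"
    using assms(4) by (auto simp: info_positions_def positions_def)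
  then have "sc_prob ns eps 1 =
      bec_expect eps (positions ns) (\<lambda>S. of_bool (x \<in> elias_erased ns S (length ns)))"
    by (simp add: bec_expect_elias_erased)
  also have "\<dots> = elias_prob ns eps x"
    unfolding bec_expect_def bec_weight_def elias_prob_def by (intro sum.cong) auto
  finally show ?thesis .
qed

end
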